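(* Let $\mathcal E=\{p_1,\dots,p_n\}\subseteq\mathbb K[x,y_1,\dots,y_n]$ be a set of $n$ polynomials, regarded as a vector. Let $\bar r_0\in\mathbb K^n$ be such that $\mathcal E(0,\bar r_0)=0$ and the matrix $(\nabla^{\eth}_{\bar y}\mathcal E)(0,\bar r_0,\bar r_0)\in\mathbb K^{n\times n}$ is invertible. Then there is a unique stream solution $\bar\sigma\in\Sigma^n$ of $\mathcal E$ with $\bar\sigma(0)=\bar r_0$. Moreover, $(\nabla^{\eth}_{\bar y}\mathcal E)(X,\bar r_0,\bar\sigma)$ is invertible in $\Sigma^{n\times n}$ and $\bar\sigma$ satisfies $$\bar\sigma'^{T}=-\big(\nabla^{\eth}_{\bar y}\mathcal E\big)(X,\bar r_0,\bar\sigma)^{-1}\cdot\Big(\frac{\eth\mathcal E}{\eth x}(X,\bar\sigma)\Big)^{T},\qquad \bar\sigma(0)=\bar r_0.$$ Furthermore, there exist polynomials $P_1,\dots,P_{n+1}\in\mathbb K[x,y_1,\dots,y_n,w]$ (with $w$ a new variable) and an initial value $c\in\mathbb K$, constructed from $\mathcal E$ and $\bar r_0$, such that the polynomial stream differential equation initial value problem $y_i'=P_i$, $y_i(0)=r_{0i}$ ($i=1,\dots,n$), $w'=P_{n+1}$, $w(0)=c$ has as unique solution $(\bar\sigma,\tau)$ for a suitable stream $\tau$.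
   Context: $\mathbb K$ is a field of characteristic $0$; streams $\Sigma=\mathbb K^\omega$ with pointwise sum, convolution product $(\sigma\times\tau)(i)=\sum_{j=0}^{i}\sigma(j)\tau(i-j)$, scalars identified with $(r,0,0,\dots)$, $X=(0,1,0,\dots)$, stream derivative $\sigma'(i)=\sigma(i+1)$. A stream solution of $\mathcal E$ is $\bar\sigma\in\Sigma^n$ with $p(X,\bar\sigma)=0$ for all $p\in\mathcal E$ ($x\mapsto X$, $y_i\mapsto\sigma_i$). A solution of a polynomial stream differential equation initial value problem $y_i'=P_i$, $y_i(0)=r_i$ is a tuple of streams $\bar\sigma$ with $\sigma_i'=P_i(X,\bar\sigma)$, $\sigma_i(0)=r_i$. Syntactic stream derivative of $p\in\mathbb K[x,\bar y]$: with new indeterminates $y_{0i},y_i'$, $y_0:=x$, $y_{00}:=0$, total order $y_0<y_1<\dots<y_n$, $\min(m)$ the least variable in monomial $m\ne1$: $(1)'=0$, $(x)'=1$, $(y_i)'=y_i'$, $(y_im)'=y_i'm+y_{0i}(m)'$ when $m\ne1$ and $y_i=\min(y_im)$, extended linearly. Writing uniquely $p'=q_0+\sum_{i=1}^nq_iy_i'$ with $q_j\in\mathbb K[x,\bar y_0,\bar y]$, set $\frac{\eth p}{\eth x}:=q_0$ (lies in $\mathbb K[x,\bar y]$) and $\frac{\eth p}{\eth y_i}:=q_i$. $\nabla^{\eth}_{\bar y}\mathcal E$ is the $n\times n$ polynomial matrix with entries $\frac{\eth p_i}{\eth y_j}$, and $\frac{\eth\mathcal E}{\eth x}=(\frac{\eth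 p_1}{\eth x},\dots,\frac{\eth p_n}{\eth x})$. $(\nabla^{\eth}_{\bar y}\mathcal E)(0,\bar r_0,\bar r_0)$ means evaluation at $x=0$, $\bar y_0=\bar r_0$, $\bar y=\bar r_0$; evaluation at $(X,\bar r_0,\bar\sigma)$ substitutes $x\mapsto X$, $y_{0i}\mapsto r_{0i}$, $y_i\mapsto\sigma_i$. *)

theory Defs
  imports "HOL-Library.Poly_Mapping" "HOL-Computational_Algebra.Formal_Power_Series"
          "Jordan_Normal_Form.Matrix"
begin

text \<open>Indeterminates.  Indices are 0-based: Y i stands for y_(i+1), Y0 i for y_(0,i+1),
  Yd i for y'_(i+1); W is the extra variable w.\<close>
datatype var = X | Y nat | Y0 nat | Yd nat | W

type_synonym 'a mpoly = "(var \<Rightarrow>\<^sub>0 nat) \<Rightarrow>\<^sub>0 'a"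

definition PVar :: "var \<Rightarrow> 'a::comm_ring_1 mpoly" where
  "PVar v = Poly_Mapping.single (Poly_Mapping.single v 1) 1"

definition PConst :: "'a::comm_ring_1 \<Rightarrow> 'a mpoly" where
  "PConst c = Poly_Mapping.single 0 c"

definition pvars :: "'a::zero mpoly \<Rightarrow> var set" where
  "pvars p = (\<Union>m\<in>Poly_Mapping.keys p. Poly_Mapping.keys m)"

definition peval :: "('a::zero \<Rightarrow> 'b::comm_ring_1) \<Rightarrow> (var \<Rightarrow> 'b) \<Rightarrow> 'a mpoly \<Rightarrow> 'b" where
  "peval f v p = (\<Sum>m\<in>Poly_Mapping.keys p. f (Poly_Mapping.lookup p m) * (\<Prod>u\<in>Poly_Mapping.keys m. v u ^ Poly_Mapping.lookup m u))"

text \<open>Variables of K[x,y] are ranked x = 0, y_(i+1) = Suc i; the total order is x < y_1 < ... < y_n.\<close>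
fun rvar :: "nat \<Rightarrow> var" where
  "rvar 0 = X" | "rvar (Suc i) = Y i"

text \<open>The variables of a monomial of K[x,y], listed in increasing order with multiplicity.\<close>
definition mono_list :: "(var \<Rightarrow>\<^sub>0 nat) \<Rightarrow> nat list" where
  "mono_list m = concat (map (\<lambda>k. replicate (Poly_Mapping.lookup m (rvar k)) k)
      [0..<Suc (\<Sum>u\<in>Poly_Mapping.keys m. case u of Y i \<Rightarrow> Suc i | _ \<Rightarrow> 0)])"

definition list_mono :: "nat list \<Rightarrow> 'a::comm_ring_1 mpoly" where
  "list_mono l = prod_list (map (\<lambda>k. PVar (rvar k)) l)"

fun dvar :: "nat \<Rightarrow> 'a::comm_ring_1 mpoly" where
  "dvar 0 = 1" | "dvar (Suc i) = PVar (Yd i)"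

fun y0var :: "nat \<Rightarrow> 'a::comm_ring_1 mpoly" where
  "y0var 0 = 0" | "y0var (Suc i) = PVar (Y0 i)"

text \<open>(1)' = 0 and (y_k m)' = y_k' m + y_(0k) (m)' with y_k = min (y_k m);
  for m = 1 this gives (y_k)' = y_k' and (x)' = 1.\<close>
fun mono_deriv :: "nat list \<Rightarrow> 'a::comm_ring_1 mpoly" where
  "mono_deriv [] = 0"
| "mono_deriv (k # l) = dvar k * list_mono l + y0var k * mono_deriv l"

definition sderiv :: "'a::comm_ring_1 mpoly \<Rightarrow> 'a mpoly" where
  "sderiv p = (\<Sum>m\<in>Poly_Mapping.keys p. PConst (Poly_Mapping.lookup p m) * mono_deriv (mono_list m))"

text \<open>Coefficient extraction from p' = q_0 + sum q_i y_i'.  dpart None selects q_0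
  (terms without any y'), dpart (Some i) selects q_(i+1) (coefficient of y_(i+1)').\<close>
definition dpart :: "nat option \<Rightarrow> 'a::comm_ring_1 mpoly \<Rightarrow> 'a mpoly" where
  "dpart j q = (\<Sum>m\<in>Poly_Mapping.keys q.
      if (\<forall>i. Poly_Mapping.lookup m (Yd i) = (if j = Some i then 1 else 0))
      then Poly_Mapping.single (m - (case j of None \<Rightarrow> 0 | Some i \<Rightarrow> Poly_Mapping.single (Yd i) 1))
               (Poly_Mapping.lookup q m)
      else 0)"

definition eth_x :: "'a::comm_ring_1 mpoly \<Rightarrow> 'a mpoly" where
  "eth_x p = dpart None (sderiv p)"

definition eth_y :: "nat \<Rightarrow> 'a::comm_ring_1 mpoly \<Rightarrow> 'a mpoly" where
  "eth_y i p = dpart (Some i) (sderiv p)"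

text \<open>Streams are 'a fps (sequences with pointwise sum and convolution product);
  scalars are fps_const, X is fps_X, stream derivative is fps_shift 1.\<close>

abbreviation sderiv_stream :: "'a::comm_ring_1 fps \<Rightarrow> 'a fps" where
  "sderiv_stream s \<equiv> fps_shift 1 s"

definition senv :: "'a::comm_ring_1 vec \<Rightarrow> 'a fps vec \<Rightarrow> 'a fps \<Rightarrow> var \<Rightarrow> 'a fps" where
  "senv r0 s t v = (case v of X \<Rightarrow> fps_X | Y i \<Rightarrow> vec_index s i
       | Y0 i \<Rightarrow> fps_const (vec_index r0 i) | Yd i \<Rightarrow> 0 | W \<Rightarrow> t)"

definition kenv :: "'a::comm_ring_1 vec \<Rightarrow> 'a vec \<Rightarrow> var \<Rightarrow> 'a" where
  "kenv r0 r v = (case v of X \<Rightarrow> 0 | Y i \<Rightarrow> vec_index r i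
       | Y0 i \<Rightarrow> vec_index r0 i | Yd i \<Rightarrow> 0 | W \<Rightarrow> 0)"

definition stream_solution :: "'a::comm_ring_1 mpoly vec \<Rightarrow> 'a fps vec \<Rightarrow> bool" where
  "stream_solution E s \<longleftrightarrow> s \<in> carrier_vec (dim_vec E) \<and>
     (\<forall>i<dim_vec E. peval fps_const (senv (0\<^sub>v (dim_vec E)) s 0) (vec_index E i) = 0)"

definition ivp_solution :: "'a::comm_ring_1 mpoly vec \<Rightarrow> 'a vec \<Rightarrow> 'a \<Rightarrow> 'a fps vec \<Rightarrow> 'a fps \<Rightarrow> bool" where
  "ivp_solution P r0 c s t \<longleftrightarrow> s \<in> carrier_vec (dim_vec r0) \<and>
     (\<forall>i<dim_vec r0. sderiv_stream (vec_index s i) = peval fps_const (senv r0 s t) (vec_index P i)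
        \<and> fps_nth (vec_index s i) 0 = vec_index r0 i) \<and>
     sderiv_stream t = peval fps_const (senv r0 s t) (vec_index P (dim_vec r0)) \<and> fps_nth t 0 = c"

definition jac_stream :: "'a::comm_ring_1 mpoly vec \<Rightarrow> 'a vec \<Rightarrow> 'a fps vec \<Rightarrow> 'a fps mat" where
  "jac_stream E r0 s = mat (dim_vec E) (dim_vec E)
     (\<lambda>(i,j). peval fps_const (senv r0 s 0) (eth_y j (vec_index E i)))"

definition jac_const :: "'a::comm_ring_1 mpoly vec \<Rightarrow> 'a vec \<Rightarrow> 'a mat" where
  "jac_const E r0 = mat (dim_vec E) (dim_vec E)
     (\<lambda>(i,j). peval id (kenv r0 r0) (eth_y j (vec_index E i)))"

end

theory Submission
  imports Defs "Jordan_Normal_Form.Determinant"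
begin

text \<open>Evaluation at streams turns the syntactic stream derivative into the stream derivative,
  and p' is linear in the y_i'; together this is the chain rule
  (p(X,\<sigma>))' = \<partial>p/\<partial>x (X,r0,\<sigma>) + \<Sum>_j \<partial>p/\<partial>y_j (X,r0,\<sigma>) \<sigma>_j' whenever \<sigma>(0) = r0.
  For a stream solution the left-hand side vanishes, so J(\<sigma>) \<sigma>' = - \<partial>E/\<partial>x with J the
  Jacobian, and J(\<sigma>) is invertible since its determinant D has D(0) = det J(r0) \<noteq> 0.

  To obtain a polynomial system, a new variable w stands for 1/D:
  y' = - w adj(J) \<partial>E/\<partial>x, w' = - c w D' with w(0) = c = 1/D(0).  Polynomial stream differential
  equations have unique solutions (Picard iteration converges coefficientwise).  For the solution
  (\<sigma>,\<tau>) one gets (1 - \<tau> D)' = - c D' (1 - \<tau> D), hence \<tau> D = 1; then E(\<sigma>)' = 0 and E(\<sigma>)(0) = 0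
  give E(\<sigma>) = 0.  Conversely every stream solution \<rho> with \<rho>(0) = r0 makes (\<rho>, 1/D(\<rho>)) a
  solution of the system, which yields uniqueness.\<close>

definition monom_eval :: "(var \<Rightarrow> 'b::comm_ring_1) \<Rightarrow> (var \<Rightarrow>\<^sub>0 nat) \<Rightarrow> 'b" where
  "monom_eval v m = (\<Prod>u\<in>Poly_Mapping.keys m. v u ^ Poly_Mapping.lookup m u)"

lemma monom_eval_superset:
  assumes "finite S" "Poly_Mapping.keys m \<subseteq> S"
  shows "monom_eval v m = (\<Prod>u\<in>S. v u ^ Poly_Mapping.lookup m u)"
  unfolding monom_eval_def
  by (rule prod.mono_neutral_left[OF assms]) (auto simp: in_keys_iff)

lemma monom_eval_add: "monom_eval v (a + b) = monom_eval v a * monom_eval v b"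
proof -
  let ?S = "Poly_Mapping.keys a \<union> Poly_Mapping.keys b"
  have S: "finite ?S" by simp
  have "monom_eval v (a + b) = (\<Prod>u\<in>?S. v u ^ Poly_Mapping.lookup (a + b) u)"
    by (rule monom_eval_superset[OF S]) (use keys_add[of a b] in blast)
  also have "\<dots> = (\<Prod>u\<in>?S. v u ^ Poly_Mapping.lookup a u * v u ^ Poly_Mapping.lookup b u)"
    by (simp add: lookup_add power_add)
  also have "\<dots> = monom_eval v a * monom_eval v b"
    by (simp add: prod.distrib monom_eval_superset[OF S])
  finally show ?thesis .
qed

lemma monom_eval_0 [simp]: "monom_eval v 0 = 1"
  by (simp add: monom_eval_def)

lemma monom_eval_single [simp]: "monom_eval v (Poly_Mapping.single u k) = v u ^ k"
  by (simp add: monom_eval_def)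

lemma monom_eval_cong:
  "(\<And>u. u \<in> Poly_Mapping.keys m \<Longrightarrow> v u = w u) \<Longrightarrow> monom_eval v m = monom_eval w m"
  unfolding monom_eval_def by (rule prod.cong) auto

lemma peval_eq_sum_monom_eval:
  "peval f v p = (\<Sum>m\<in>Poly_Mapping.keys p. f (Poly_Mapping.lookup p m) * monom_eval v m)"
  unfolding peval_def monom_eval_def ..

lemma peval_superset:
  assumes "finite S" "Poly_Mapping.keys p \<subseteq> S" "f 0 = 0"
  shows "peval f v p = (\<Sum>m\<in>S. f (Poly_Mapping.lookup p m) * monom_eval v m)"
  unfolding peval_eq_sum_monom_eval
  by (rule sum.mono_neutral_left[OF assms(1,2)]) (auto simp: in_keys_iff assms(3))

lemma peval_0 [simp]: "peval f v 0 = 0"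
  by (simp add: peval_def)

lemma peval_single: "f 0 = 0 \<Longrightarrow> peval f v (Poly_Mapping.single m c) = f c * monom_eval v m"
  by (simp add: peval_eq_sum_monom_eval)

lemma peval_add:
  assumes "comm_ring_hom f"
  shows "peval f v (p + q) = peval f v p + peval f v q"
proof -
  interpret comm_ring_hom f by fact
  let ?S = "Poly_Mapping.keys p \<union> Poly_Mapping.keys q"
  have S: "finite ?S" by simp
  have "peval f v (p + q) = (\<Sum>m\<in>?S. f (Poly_Mapping.lookup (p + q) m) * monom_eval v m)"
    by (rule peval_superset[OF S]) (use keys_add[of p q] in auto)
  also have "\<dots> = (\<Sum>m\<in>?S. f (Poly_Mapping.lookup p m) * monom_eval v m
                          + f (Poly_Mapping.lookup q m) * monom_eval v m)"
    by (simp add: lookup_add hom_add distrib_right)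
  also have "\<dots> = peval f v p + peval f v q"
    by (simp add: sum.distrib peval_superset[OF S])
  finally show ?thesis .
qed

lemma peval_sum: "comm_ring_hom f \<Longrightarrow> peval f v (sum g A) = (\<Sum>a\<in>A. peval f v (g a))"
  by (induction A rule: infinite_finite_induct) (auto simp: peval_add)

lemma poly_mapping_sum_single_keys:
  "p = (\<Sum>m\<in>Poly_Mapping.keys p. Poly_Mapping.single m (Poly_Mapping.lookup p m))"
  by (rule poly_mapping_eqI) (simp add: lookup_sum lookup_single when_def in_keys_iff)

lemma peval_mult:
  assumes "comm_ring_hom f"
  shows "peval f v (p * q) = peval f v p * peval f v q"
proof -
  interpret comm_ring_hom f by fact
  have "p * q = (\<Sum>a\<in>Poly_Mapping.keys p. \<Sum>b\<in>Poly_Mapping.keys q.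
      Poly_Mapping.single (a + b) (Poly_Mapping.lookup p a * Poly_Mapping.lookup q b))"
    by (subst poly_mapping_sum_single_keys[of p], subst poly_mapping_sum_single_keys[of q])
      (simp add: sum_product mult_single)
  then have "peval f v (p * q) = (\<Sum>a\<in>Poly_Mapping.keys p. \<Sum>b\<in>Poly_Mapping.keys q.
      f (Poly_Mapping.lookup p a) * monom_eval v a * (f (Poly_Mapping.lookup q b) * monom_eval v b))"
    by (simp add: peval_sum[OF assms] peval_single monom_eval_add hom_mult ac_simps)
  also have "\<dots> = peval f v p * peval f v q"
    by (simp add: peval_eq_sum_monom_eval sum_product)
  finally show ?thesis .
qed

lemma peval_1:
  assumes "comm_ring_hom f"
  shows "peval f v 1 = 1"
proof -
  interpret comm_ring_hom f by fact
  show ?thesis using peval_single[of f v 0 1] by simp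
qed

lemma comm_ring_hom_peval: "comm_ring_hom f \<Longrightarrow> comm_ring_hom (peval f v)"
  by unfold_locales (simp_all add: peval_add peval_mult peval_1)

lemma peval_PConst:
  assumes "comm_ring_hom f"
  shows "peval f v (PConst c) = f c"
proof -
  interpret comm_ring_hom f by fact
  show ?thesis by (simp add: PConst_def peval_single)
qed

lemma peval_PVar:
  assumes "comm_ring_hom f"
  shows "peval f v (PVar u) = v u"
proof -
  interpret comm_ring_hom f by fact
  show ?thesis by (simp add: PVar_def peval_single)
qed

lemma peval_uminus:
  assumes "comm_ring_hom f"
  shows "peval f v (- p) = - peval f v p"
proof -
  interpret comm_ring_hom "peval f v" by (rule comm_ring_hom_peval[OF assms])
  show ?thesis by (rule hom_uminus)
qed

lemma hom_peval:
  assumes "comm_ring_hom h"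
  shows "h (peval f v p) = peval (h \<circ> f) (h \<circ> v) p"
proof -
  interpret comm_ring_hom h by fact
  show ?thesis unfolding peval_def hom_sum hom_mult hom_prod hom_power o_def ..
qed

lemma peval_cong: "(\<And>u. u \<in> pvars p \<Longrightarrow> v u = w u) \<Longrightarrow> peval f v p = peval f w p"
  unfolding peval_eq_sum_monom_eval pvars_def
  by (rule sum.cong[OF refl], rule arg_cong[where f = "\<lambda>x. _ * x"], rule monom_eval_cong) auto

lemma comm_ring_hom_fps_const: "comm_ring_hom fps_const"
  by unfold_locales auto

lemma comm_ring_hom_PConst: "comm_ring_hom (PConst :: 'a::comm_ring_1 \<Rightarrow> 'a mpoly)"
  by unfold_locales (auto simp: PConst_def single_add mult_single)

lemma comm_ring_hom_fps_nth_0: "comm_ring_hom (\<lambda>a::'a::comm_ring_1 fps. fps_nth a 0)"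
  by unfold_locales simp_all

lemmas peval_fps_const_simps =
  peval_add[OF comm_ring_hom_fps_const] peval_mult[OF comm_ring_hom_fps_const]
  peval_sum[OF comm_ring_hom_fps_const] peval_1[OF comm_ring_hom_fps_const]
  peval_PVar[OF comm_ring_hom_fps_const] peval_PConst[OF comm_ring_hom_fps_const]

lemma keys_add_nat:
  "Poly_Mapping.keys (a + b :: var \<Rightarrow>\<^sub>0 nat) = Poly_Mapping.keys a \<union> Poly_Mapping.keys b"
  by (auto simp: in_keys_iff lookup_add)

lemma pvars_add: "pvars (p + q) \<subseteq> pvars p \<union> pvars q"
  unfolding pvars_def using keys_add[of p q] by blast

lemma pvars_mult: "pvars (p * q) \<subseteq> pvars p \<union> pvars q"
proof
  fix u assume "u \<in> pvars (p * q)"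
  then obtain m where m: "m \<in> Poly_Mapping.keys (p * q)" "u \<in> Poly_Mapping.keys m"
    unfolding pvars_def by blast
  from m(1) keys_mult[of p q] obtain a b
    where "m = a + b" "a \<in> Poly_Mapping.keys p" "b \<in> Poly_Mapping.keys q" by blast
  with m(2) show "u \<in> pvars p \<union> pvars q"
    unfolding pvars_def by (auto simp: keys_add_nat)
qed

lemma pvars_single: "pvars (Poly_Mapping.single m c) \<subseteq> Poly_Mapping.keys m"
  unfolding pvars_def by auto

lemma pvars_0 [simp]: "pvars 0 = {}"
  unfolding pvars_def by auto

lemma pvars_1 [simp]: "pvars (1 :: 'a::comm_ring_1 mpoly) = {}"
  unfolding pvars_def by auto

lemma pvars_uminus [simp]: "pvars (- p) = pvars p"
  unfolding pvars_def by simp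

lemma pvars_PConst [simp]: "pvars (PConst c) = {}"
  unfolding pvars_def PConst_def by auto

lemma pvars_PVar: "pvars (PVar u :: 'a::comm_ring_1 mpoly) \<subseteq> {u}"
  unfolding pvars_def PVar_def by auto

lemma pvars_sum: "pvars (sum g A) \<subseteq> (\<Union>a\<in>A. pvars (g a))"
proof (induction A rule: infinite_finite_induct)
  case (insert x F)
  then show ?case using pvars_add[of "g x" "sum g F"] by auto
qed auto

lemma pvars_prod: "pvars (prod g A) \<subseteq> (\<Union>a\<in>A. pvars (g a :: 'a::comm_ring_1 mpoly))"
proof (induction A rule: infinite_finite_induct)
  case (insert x F)
  then show ?case using pvars_mult[of "g x" "prod g F"] by auto
qed auto

lemma pvars_power: "pvars (p ^ k :: 'a::comm_ring_1 mpoly) \<subseteq> pvars p"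
  by (induction k) (use pvars_mult in auto)

lemma pvars_of_int [simp]: "pvars (of_int k :: 'a::comm_ring_1 mpoly) = {}"
proof -
  interpret comm_ring_hom "PConst :: 'a \<Rightarrow> 'a mpoly" by (rule comm_ring_hom_PConst)
  have "(of_int k :: 'a mpoly) = PConst (of_int k)" by (simp add: hom_of_int)
  then show ?thesis by simp
qed

lemma pvars_det:
  assumes "A \<in> carrier_mat n n" "\<And>i j. i < n \<Longrightarrow> j < n \<Longrightarrow> pvars (A $$ (i, j)) \<subseteq> V"
  shows "pvars (det A :: 'a::comm_ring_1 mpoly) \<subseteq> V"
  unfolding det_def'[OF assms(1)]
proof (rule order.trans[OF pvars_sum UN_least])
  fix p assume "p \<in> {p. p permutes {0..<n}}"
  then have "\<forall>i\<in>{0..<n}. pvars (A $$ (i, p i)) \<subseteq> V"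
    using permutes_in_image assms(2) by fastforce
  then have "pvars (\<Prod>i = 0..<n. A $$ (i, p i)) \<subseteq> V"
    using pvars_prod[of "\<lambda>i. A $$ (i, p i)" "{0..<n}"] by blast
  then show "pvars (of_int (sign p) * (\<Prod>i = 0..<n. A $$ (i, p i))) \<subseteq> V"
    using pvars_mult[of "of_int (sign p)"] pvars_of_int[of "sign p"] by blast
qed

lemma pvars_adj_mat:
  assumes A: "A \<in> carrier_mat n n" "\<And>i j. i < n \<Longrightarrow> j < n \<Longrightarrow> pvars (A $$ (i, j)) \<subseteq> V"
    and "i < n" "j < n"
  shows "pvars (adj_mat A $$ (i, j) :: 'a::comm_ring_1 mpoly) \<subseteq> V"
proof -
  have "pvars (det (mat_delete A j i)) \<subseteq> V"
  proof (rule pvars_det[OF mat_delete_carrier[OF A(1)]])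
    fix a b assume "a < n - 1" "b < n - 1"
    then show "pvars (mat_delete A j i $$ (a, b)) \<subseteq> V"
      using A by (auto simp: mat_delete_def)
  qed
  moreover have "pvars ((-1 :: 'a mpoly) ^ (j + i)) = {}"
    using pvars_power[of "-1 :: 'a mpoly" "j + i"] by simp
  ultimately show ?thesis
    using assms pvars_mult[of "(-1 :: 'a mpoly) ^ (j + i)" "det (mat_delete A j i)"]
    by (auto simp: adj_mat_def cofactor_def)
qed

lemma pvars_peval_PConst: "pvars (peval PConst e p) \<subseteq> (\<Union>u\<in>pvars p. pvars (e u))"
  unfolding peval_eq_sum_monom_eval
proof (rule order.trans[OF pvars_sum UN_least])
  fix m assume m: "m \<in> Poly_Mapping.keys p"
  have "pvars (monom_eval e m) \<subseteq> (\<Union>u\<in>Poly_Mapping.keys m. pvars (e u ^ Poly_Mapping.lookup m u))"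
    unfolding monom_eval_def by (rule pvars_prod)
  also have "\<dots> \<subseteq> (\<Union>u\<in>pvars p. pvars (e u))"
    using m pvars_power unfolding pvars_def by fastforce
  finally show "pvars (PConst (Poly_Mapping.lookup p m) * monom_eval e m) \<subseteq> (\<Union>u\<in>pvars p. pvars (e u))"
    using pvars_mult[of "PConst (Poly_Mapping.lookup p m)"] by auto
qed

definition deriv_vars :: "nat \<Rightarrow> var set" where
  "deriv_vars n = insert X (Y ` {..<n} \<union> Y0 ` {..<n} \<union> Yd ` {..<n})"

definition subst_init_env :: "'a::comm_ring_1 vec \<Rightarrow> nat \<Rightarrow> var \<Rightarrow> 'a mpoly" where
  "subst_init_env r0 n v = (case v of X \<Rightarrow> PVar X | Y i \<Rightarrow> (if i < n then PVar (Y i) else 0)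
      | Y0 i \<Rightarrow> PConst (vec_index r0 i) | Yd i \<Rightarrow> 0 | W \<Rightarrow> 0)"

definition subst_init :: "'a::comm_ring_1 vec \<Rightarrow> nat \<Rightarrow> 'a mpoly \<Rightarrow> 'a mpoly" where
  "subst_init r0 n p = peval PConst (subst_init_env r0 n) p"

lemma pvars_subst_init: "pvars (subst_init r0 n p) \<subseteq> insert X (Y ` {..<n})"
proof -
  have "pvars (subst_init_env r0 n u) \<subseteq> insert X (Y ` {..<n})" for u
    using pvars_PVar[of u] by (cases u) (auto simp: subst_init_env_def)
  then show ?thesis unfolding subst_init_def using pvars_peval_PConst by blast
qed

lemma peval_subst_init:
  assumes "comm_ring_hom f"
  shows "peval f w (subst_init r0 n p) = peval f (peval f w \<circ> subst_init_env r0 n) p"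
proof -
  have "peval f w (subst_init r0 n p) = peval (peval f w \<circ> PConst) (peval f w \<circ> subst_init_env r0 n) p"
    unfolding subst_init_def by (rule hom_peval[OF comm_ring_hom_peval[OF assms]])
  also have "peval f w \<circ> PConst = f"
    by (rule ext) (simp add: peval_PConst[OF assms])
  finally show ?thesis .
qed

lemma peval_subst_init_senv:
  assumes "pvars p \<subseteq> deriv_vars n" "dim_vec r0 = n"
  shows "peval fps_const (senv r0 s t) (subst_init r0 n p) = peval fps_const (senv r0 s 0) p"
  unfolding peval_subst_init[OF comm_ring_hom_fps_const]
proof (rule peval_cong)
  fix u assume "u \<in> pvars p"
  with assms have "u \<in> deriv_vars n" by auto
  then show "(peval fps_const (senv r0 s t) \<circ> subst_init_env r0 n) u = senv r0 s 0 u"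
    by (auto simp: deriv_vars_def subst_init_env_def senv_def peval_fps_const_simps)
qed

lemma fps_nth_0_peval_senv:
  assumes "pvars p \<subseteq> deriv_vars n" "\<forall>i<n. fps_nth (vec_index s i) 0 = vec_index r0 i"
  shows "fps_nth (peval fps_const (senv r0 s 0) p) 0 = peval id (kenv r0 r0) p"
proof -
  have "fps_nth (peval fps_const (senv r0 s 0) p) 0 =
      peval ((\<lambda>a. fps_nth a 0) \<circ> fps_const) ((\<lambda>a. fps_nth a 0) \<circ> senv r0 s 0) p"
    by (rule hom_peval[OF comm_ring_hom_fps_nth_0])
  also have "(\<lambda>a. fps_nth a 0) \<circ> (fps_const :: 'a \<Rightarrow> 'a fps) = id"
    by (rule ext) simp
  also have "peval id ((\<lambda>a. fps_nth a 0) \<circ> senv r0 s 0) p = peval id (kenv r0 r0) p"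
  proof (rule peval_cong)
    fix u assume "u \<in> pvars p"
    with assms(1) have "u \<in> deriv_vars n" by auto
    then show "((\<lambda>a. fps_nth a 0) \<circ> senv r0 s 0) u = kenv r0 r0 u"
      using assms(2) by (auto simp: deriv_vars_def senv_def kenv_def)
  qed
  finally show ?thesis .
qed

lemma fps_shift_1_mult:
  "fps_shift 1 (a * b) = fps_shift 1 a * b + fps_const (fps_nth a 0) * fps_shift 1 (b :: 'a::comm_ring_1 fps)"
proof (rule fps_ext)
  fix n
  have "fps_nth (a * b) (Suc n) = fps_nth a 0 * fps_nth b (Suc n) + (\<Sum>i=0..n. fps_nth a (Suc i) * fps_nth b (n - i))"
    unfolding fps_mult_nth by (subst sum.atLeast0_atMost_Suc_shift) simp
  moreover have "fps_nth (fps_shift 1 a * b) n = (\<Sum>i=0..n. fps_nth a (Suc i) * fps_nth b (n - i))"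
    by (simp add: fps_mult_nth)
  moreover have "fps_nth (fps_const (fps_nth a 0) * fps_shift 1 b) n = fps_nth a 0 * fps_nth b (Suc n)"
    by simp
  ultimately show "fps_nth (fps_shift 1 (a * b)) n = fps_nth (fps_shift 1 a * b + fps_const (fps_nth a 0) * fps_shift 1 b) n"
    by (simp only: fps_shift_nth fps_add_nth) simp
qed

lemma fps_shift_1_X_mult: "fps_shift 1 (fps_X * f) = (f :: 'a::comm_ring_1 fps)"
  by (metis fps_shift_times_fps_X' mult.commute)

lemma fps_shift_1_const_plus_X_mult: "fps_shift 1 (fps_const c + fps_X * a) = (a :: 'a::comm_ring_1 fps)"
  by (rule fps_ext) simp

lemma fps_shift_const_mult: "fps_shift k (fps_const c * a) = fps_const c * fps_shift k (a :: 'a::comm_ring_1 fps)"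
  by (rule fps_ext) simp

lemma fps_shift_sum: "fps_shift k (sum g A) = (\<Sum>a\<in>A. fps_shift k (g a))"
  by (induction A rule: infinite_finite_induct) (auto simp: fps_shift_add)

lemma fps_eq_0_if_shift_eq_mult:
  assumes "fps_shift 1 u = a * u" "fps_nth u 0 = 0"
  shows "u = (0 :: 'a::comm_ring_1 fps)"
proof -
  have "\<forall>j\<le>m. fps_nth u j = 0" for m
  proof (induction m)
    case 0 then show ?case using assms(2) by simp
  next
    case (Suc m)
    have "fps_nth u (Suc m) = fps_nth (a * u) m"
      using arg_cong[OF assms(1), of "\<lambda>f. fps_nth f m"] by simp
    also have "\<dots> = 0"
      unfolding fps_mult_nth by (rule sum.neutral) (use Suc in auto)
    finally show ?case using Suc le_Suc_eq by auto
  qed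
  then show ?thesis by (intro fps_ext) auto
qed

lemma rvar_mem_keys_if_mem_mono_list: "k \<in> set (mono_list m) \<Longrightarrow> rvar k \<in> Poly_Mapping.keys m"
  by (auto simp: mono_list_def in_keys_iff)

lemma inj_rvar: "inj rvar"
proof
  fix a b assume "rvar a = rvar b"
  then show "a = b" by (cases a; cases b) auto
qed

lemma prod_list_concat: "prod_list (concat xs) = prod_list (map prod_list xs)"
  by (induction xs) auto

lemma prod_list_mono_list:
  assumes "Poly_Mapping.keys m \<subseteq> range rvar"
  shows "prod_list (map (\<lambda>k. g (rvar k)) (mono_list m)) = monom_eval g m"
proof -
  define N where "N = Suc (\<Sum>u\<in>Poly_Mapping.keys m. case u of Y i \<Rightarrow> Suc i | _ \<Rightarrow> 0)"
  have keys: "Poly_Mapping.keys m \<subseteq> rvar ` {0..<N}"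
  proof
    fix u assume u: "u \<in> Poly_Mapping.keys m"
    with assms obtain k where k: "u = rvar k" by auto
    have "(case u of Y i \<Rightarrow> Suc i | _ \<Rightarrow> 0) \<le> (\<Sum>u\<in>Poly_Mapping.keys m. case u of Y i \<Rightarrow> Suc i | _ \<Rightarrow> 0)"
      by (rule member_le_sum) (use u in auto)
    then have "k < N" using k by (cases k) (auto simp: N_def)
    then show "u \<in> rvar ` {0..<N}" using k by auto
  qed
  have "prod_list (map (\<lambda>k. g (rvar k)) (mono_list m)) =
      prod_list (map (\<lambda>k. g (rvar k) ^ Poly_Mapping.lookup m (rvar k)) [0..<N])"
    unfolding mono_list_def N_def[symmetric]
    by (simp add: map_concat prod_list_concat o_def prod_list_replicate)
  also have "\<dots> = (\<Prod>k\<in>{0..<N}. g (rvar k) ^ Poly_Mapping.lookup m (rvar k))"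
    by (rule prod.distinct_set_conv_list[symmetric, of "[0..<N]", simplified])
  also have "\<dots> = (\<Prod>u\<in>rvar ` {0..<N}. g u ^ Poly_Mapping.lookup m u)"
    by (subst prod.reindex) (use inj_rvar in \<open>auto intro: inj_on_subset\<close>)
  also have "\<dots> = monom_eval g m"
    by (rule monom_eval_superset[symmetric]) (use keys in auto)
  finally show ?thesis .
qed

lemma list_mono_Cons: "list_mono (k # l) = PVar (rvar k) * list_mono l"
  by (simp add: list_mono_def)

lemma peval_list_mono: "peval fps_const e (list_mono l) = prod_list (map (\<lambda>k. e (rvar k)) l)"
  by (induction l) (auto simp: list_mono_Cons peval_fps_const_simps list_mono_def)

lemma peval_mono_deriv:
  assumes "e X = fps_X"
    and "\<forall>i. Suc i \<in> set l \<longrightarrow> e (Yd i) = fps_shift 1 (e (Y i)) \<and> e (Y0 i) = fps_const (fps_nth (e (Y i)) 0)"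
  shows "peval fps_const e (mono_deriv l) = fps_shift 1 (prod_list (map (\<lambda>k. e (rvar k)) l))"
  using assms(2)
proof (induction l)
  case Nil
  then show ?case by (simp add: fps_shift_one)
next
  case (Cons k l)
  then have IH: "peval fps_const e (mono_deriv l) = fps_shift 1 (prod_list (map (\<lambda>k. e (rvar k)) l))"
    by auto
  show ?case
  proof (cases k)
    case 0
    then show ?thesis
      by (simp add: peval_fps_const_simps IH peval_list_mono assms(1) fps_shift_1_X_mult[simplified])
  next
    case (Suc i)
    with Cons.prems have "e (Yd i) = fps_shift 1 (e (Y i))" "e (Y0 i) = fps_const (fps_nth (e (Y i)) 0)"
      by auto
    with Suc show ?thesis
      by (simp add: peval_fps_const_simps IH peval_list_mono fps_shift_1_mult[simplified])
  qed
qed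

lemma peval_sderiv:
  assumes "pvars p \<subseteq> range rvar" "e X = fps_X"
    and "\<forall>i. Y i \<in> pvars p \<longrightarrow> e (Yd i) = fps_shift 1 (e (Y i)) \<and> e (Y0 i) = fps_const (fps_nth (e (Y i)) 0)"
  shows "peval fps_const e (sderiv p) = fps_shift 1 (peval fps_const e p)"
proof -
  have "peval fps_const e (mono_deriv (mono_list m)) = fps_shift 1 (monom_eval e m)"
    if m: "m \<in> Poly_Mapping.keys p" for m
  proof -
    have keys: "Poly_Mapping.keys m \<subseteq> pvars p" using m unfolding pvars_def by auto
    have "peval fps_const e (mono_deriv (mono_list m)) =
        fps_shift 1 (prod_list (map (\<lambda>k. e (rvar k)) (mono_list m)))"
    proof (rule peval_mono_deriv[of e, OF assms(2)], intro allI impI)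
      fix i assume "Suc i \<in> set (mono_list m)"
      then have "Y i \<in> pvars p" using rvar_mem_keys_if_mem_mono_list keys by fastforce
      with assms(3) show "e (Yd i) = fps_shift 1 (e (Y i)) \<and> e (Y0 i) = fps_const (fps_nth (e (Y i)) 0)"
        by auto
    qed
    also have "\<dots> = fps_shift 1 (monom_eval e m)"
      using prod_list_mono_list[of m e] keys assms(1) by auto
    finally show ?thesis .
  qed
  then have "peval fps_const e (sderiv p) =
      (\<Sum>m\<in>Poly_Mapping.keys p. fps_const (Poly_Mapping.lookup p m) * fps_shift 1 (monom_eval e m))"
    unfolding sderiv_def by (simp add: peval_fps_const_simps)
  also have "\<dots> = fps_shift 1 (peval fps_const e p)"
    by (simp add: peval_eq_sum_monom_eval fps_shift_sum fps_shift_const_mult)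
  finally show ?thesis .
qed

definition yd_weight :: "var \<Rightarrow> nat" where
  "yd_weight u = (case u of Yd _ \<Rightarrow> 1 | _ \<Rightarrow> 0)"

definition yd_deg :: "(var \<Rightarrow>\<^sub>0 nat) \<Rightarrow> nat" where
  "yd_deg m = (\<Sum>u\<in>Poly_Mapping.keys m. yd_weight u * Poly_Mapping.lookup m u)"

definition yd_deg_le :: "nat \<Rightarrow> 'a::comm_ring_1 mpoly \<Rightarrow> bool" where
  "yd_deg_le k q \<longleftrightarrow> (\<forall>m\<in>Poly_Mapping.keys q. yd_deg m \<le> k)"

lemma yd_deg_superset:
  assumes "finite S" "Poly_Mapping.keys m \<subseteq> S"
  shows "yd_deg m = (\<Sum>u\<in>S. yd_weight u * Poly_Mapping.lookup m u)"
  unfolding yd_deg_def by (rule sum.mono_neutral_left[OF assms]) (auto simp: in_keys_iff)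

lemma yd_deg_add: "yd_deg (a + b) = yd_deg a + yd_deg b"
proof -
  have "finite (Poly_Mapping.keys a \<union> Poly_Mapping.keys b)" by simp
  from yd_deg_superset[OF this] show ?thesis
    by (simp add: keys_add_nat lookup_add distrib_left sum.distrib)
qed

lemma lookup_Yd_add_le_yd_deg:
  assumes "i \<noteq> j"
  shows "Poly_Mapping.lookup m (Yd i) + Poly_Mapping.lookup m (Yd j) \<le> yd_deg m"
proof -
  let ?S = "Poly_Mapping.keys m \<union> {Yd i, Yd j}"
  have "Poly_Mapping.lookup m (Yd i) + Poly_Mapping.lookup m (Yd j)
      = (\<Sum>u\<in>{Yd i, Yd j}. yd_weight u * Poly_Mapping.lookup m u)"
    using assms by (simp add: yd_weight_def)
  also have "\<dots> \<le> (\<Sum>u\<in>?S. yd_weight u * Poly_Mapping.lookup m u)"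
    by (rule sum_mono2) auto
  also have "\<dots> = yd_deg m"
    by (rule yd_deg_superset[symmetric]) auto
  finally show ?thesis .
qed

lemma lookup_Yd_le_yd_deg: "Poly_Mapping.lookup m (Yd i) \<le> yd_deg m"
proof -
  let ?S = "Poly_Mapping.keys m \<union> {Yd i}"
  have "Poly_Mapping.lookup m (Yd i) = (\<Sum>u\<in>{Yd i}. yd_weight u * Poly_Mapping.lookup m u)"
    by (simp add: yd_weight_def)
  also have "\<dots> \<le> (\<Sum>u\<in>?S. yd_weight u * Poly_Mapping.lookup m u)"
    by (rule sum_mono2) auto
  also have "\<dots> = yd_deg m"
    by (rule yd_deg_superset[symmetric]) auto
  finally show ?thesis .
qed

lemma yd_deg_le_add: "yd_deg_le k p \<Longrightarrow> yd_deg_le k q \<Longrightarrow> yd_deg_le k (p + q)"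
  unfolding yd_deg_le_def using keys_add[of p q] by blast

lemma yd_deg_le_mult:
  assumes "yd_deg_le k p" "yd_deg_le l q"
  shows "yd_deg_le (k + l) (p * q)"
  unfolding yd_deg_le_def
proof
  fix m assume "m \<in> Poly_Mapping.keys (p * q)"
  with keys_mult[of p q] obtain a b
    where "m = a + b" "a \<in> Poly_Mapping.keys p" "b \<in> Poly_Mapping.keys q" by blast
  with assms show "yd_deg m \<le> k + l"
    unfolding yd_deg_le_def by (simp add: yd_deg_add add_mono)
qed

lemma yd_deg_le_0 [simp]: "yd_deg_le k 0"
  unfolding yd_deg_le_def by simp

lemma yd_deg_le_1 [simp]: "yd_deg_le k (1 :: 'a::comm_ring_1 mpoly)"
  unfolding yd_deg_le_def by (simp add: yd_deg_def)

lemma yd_deg_le_PConst [simp]: "yd_deg_le k (PConst c)"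
  unfolding yd_deg_le_def PConst_def by (auto simp: yd_deg_def)

lemma yd_deg_le_PVar: "yd_deg_le (yd_weight u) (PVar u :: 'a::comm_ring_1 mpoly)"
  unfolding yd_deg_le_def PVar_def yd_deg_def by auto

lemma yd_deg_le_sum: "(\<And>a. a \<in> A \<Longrightarrow> yd_deg_le k (g a)) \<Longrightarrow> yd_deg_le k (sum g A)"
  by (induction A rule: infinite_finite_induct) (auto intro: yd_deg_le_add)

lemma yd_deg_le_list_mono: "yd_deg_le 0 (list_mono l :: 'a::comm_ring_1 mpoly)"
proof (induction l)
  case Nil
  then show ?case by (simp add: list_mono_def)
next
  case (Cons k l)
  have "yd_weight (rvar k) = 0" by (cases k) (auto simp: yd_weight_def)
  then have "yd_deg_le (0 + 0) (PVar (rvar k) * list_mono l :: 'a mpoly)"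
    using yd_deg_le_mult[OF yd_deg_le_PVar[of "rvar k"] Cons.IH] by simp
  then show ?case by (simp add: list_mono_Cons)
qed

lemma yd_deg_le_mono_deriv: "yd_deg_le 1 (mono_deriv l :: 'a::comm_ring_1 mpoly)"
proof (induction l)
  case Nil
  then show ?case by simp
next
  case (Cons k l)
  have "yd_deg_le 1 (dvar k :: 'a mpoly)"
    by (cases k) (use yd_deg_le_PVar[of "Yd _"] in \<open>auto simp: yd_weight_def\<close>)
  then have "yd_deg_le (1 + 0) (dvar k * list_mono l :: 'a mpoly)"
    by (rule yd_deg_le_mult[OF _ yd_deg_le_list_mono])
  moreover have "yd_deg_le 0 (y0var k :: 'a mpoly)"
    by (cases k) (use yd_deg_le_PVar[of "Y0 _"] in \<open>auto simp: yd_weight_def\<close>)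
  then have "yd_deg_le (0 + 1) (y0var k * mono_deriv l :: 'a mpoly)"
    by (rule yd_deg_le_mult[OF _ Cons.IH])
  ultimately show ?case by (simp add: yd_deg_le_add)
qed

lemma yd_deg_le_sderiv: "yd_deg_le 1 (sderiv p)"
  unfolding sderiv_def
  by (rule yd_deg_le_sum) (use yd_deg_le_mult[OF yd_deg_le_PConst yd_deg_le_mono_deriv] in auto)

lemma pvars_list_mono: "pvars (list_mono l :: 'a::comm_ring_1 mpoly) \<subseteq> rvar ` set l"
proof (induction l)
  case Nil
  then show ?case by (simp add: list_mono_def)
next
  case (Cons k l)
  then show ?case
    using pvars_mult[of "PVar (rvar k) :: 'a mpoly" "list_mono l"] pvars_PVar[of "rvar k"]
    by (auto simp: list_mono_Cons)
qed

definition rvar_deriv_vars :: "nat \<Rightarrow> var set" where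
  "rvar_deriv_vars k = (case k of 0 \<Rightarrow> {X} | Suc i \<Rightarrow> {Y i, Yd i, Y0 i})"

lemma pvars_mono_deriv:
  "pvars (mono_deriv l :: 'a::comm_ring_1 mpoly) \<subseteq> (\<Union>k\<in>set l. rvar_deriv_vars k)"
proof (induction l)
  case Nil
  then show ?case by simp
next
  case (Cons k l)
  let ?U = "\<Union>k\<in>set l. rvar_deriv_vars k"
  have dvar: "pvars (dvar k :: 'a mpoly) \<subseteq> rvar_deriv_vars k"
    by (cases k) (use pvars_PVar[of "Yd _"] in \<open>auto simp: rvar_deriv_vars_def\<close>)
  have y0var: "pvars (y0var k :: 'a mpoly) \<subseteq> rvar_deriv_vars k"
    by (cases k) (use pvars_PVar[of "Y0 _"] in \<open>auto simp: rvar_deriv_vars_def\<close>)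
  have "rvar k' \<in> rvar_deriv_vars k'" for k'
    by (cases k') (auto simp: rvar_deriv_vars_def)
  then have list_mono: "pvars (list_mono l :: 'a mpoly) \<subseteq> ?U"
    using pvars_list_mono[of l] by fastforce
  have "pvars (dvar k * list_mono l :: 'a mpoly) \<subseteq> rvar_deriv_vars k \<union> ?U"
    by (rule order.trans[OF pvars_mult Un_mono[OF dvar list_mono]])
  moreover have "pvars (y0var k * mono_deriv l :: 'a mpoly) \<subseteq> rvar_deriv_vars k \<union> ?U"
    by (rule order.trans[OF pvars_mult Un_mono[OF y0var Cons.IH]])
  ultimately have "pvars (mono_deriv (k # l) :: 'a mpoly) \<subseteq> (rvar_deriv_vars k \<union> ?U) \<union> (rvar_deriv_vars k \<union> ?U)"
    unfolding mono_deriv.simps by (intro order.trans[OF pvars_add Un_mono])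
  then show ?case by auto
qed

lemma pvars_sderiv:
  assumes "pvars p \<subseteq> insert X (Y ` {..<n})"
  shows "pvars (sderiv p) \<subseteq> deriv_vars n"
  unfolding sderiv_def
proof (rule order.trans[OF pvars_sum UN_least])
  fix m assume m: "m \<in> Poly_Mapping.keys p"
  have "rvar_deriv_vars k \<subseteq> deriv_vars n" if "k \<in> set (mono_list m)" for k
  proof -
    have "rvar k \<in> pvars p"
      using rvar_mem_keys_if_mem_mono_list[OF that] m unfolding pvars_def by auto
    with assms show ?thesis by (cases k) (auto simp: rvar_deriv_vars_def deriv_vars_def)
  qed
  then have "pvars (mono_deriv (mono_list m) :: 'a mpoly) \<subseteq> deriv_vars n"
    using pvars_mono_deriv[of "mono_list m"] by blast
  then show "pvars (PConst (Poly_Mapping.lookup p m) * mono_deriv (mono_list m)) \<subseteq> deriv_vars n"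
    using pvars_mult[of "PConst (Poly_Mapping.lookup p m)" "mono_deriv (mono_list m)"] by auto
qed

lemma pvars_dpart: "pvars (dpart j q) \<subseteq> pvars q"
  unfolding dpart_def
proof (rule order.trans[OF pvars_sum UN_least])
  fix m assume "m \<in> Poly_Mapping.keys q"
  then have "Poly_Mapping.keys (m - x) \<subseteq> pvars q" for x
    unfolding pvars_def by (auto simp: in_keys_iff lookup_minus)
  then have "pvars (if b then Poly_Mapping.single (m - x) c else 0) \<subseteq> pvars q" for b x c
    using pvars_single[of "m - x" c] by auto
  then show "pvars (if \<forall>i. Poly_Mapping.lookup m (Yd i) = (if j = Some i then 1 else 0)
      then Poly_Mapping.single (m - (case j of None \<Rightarrow> 0 | Some i \<Rightarrow> Poly_Mapping.single (Yd i) 1))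
               (Poly_Mapping.lookup q m)
      else 0) \<subseteq> pvars q" .
qed

lemma pvars_eth_x: "pvars p \<subseteq> insert X (Y ` {..<n}) \<Longrightarrow> pvars (eth_x p) \<subseteq> deriv_vars n"
  unfolding eth_x_def using pvars_dpart pvars_sderiv by blast

lemma pvars_eth_y: "pvars p \<subseteq> insert X (Y ` {..<n}) \<Longrightarrow> pvars (eth_y j p) \<subseteq> deriv_vars n"
  unfolding eth_y_def using pvars_dpart pvars_sderiv by blast

subsection \<open>The chain rule\<close>

definition yd_pattern :: "nat option \<Rightarrow> (var \<Rightarrow>\<^sub>0 nat) \<Rightarrow> bool" where
  "yd_pattern j m \<longleftrightarrow> (\<forall>i. Poly_Mapping.lookup m (Yd i) = (if j = Some i then 1 else 0))"

definition yd_monom :: "nat option \<Rightarrow> (var \<Rightarrow>\<^sub>0 nat)" where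
  "yd_monom j = (case j of None \<Rightarrow> 0 | Some i \<Rightarrow> Poly_Mapping.single (Yd i) 1)"

lemma peval_dpart:
  assumes "comm_ring_hom f"
  shows "peval f e (dpart j q) = (\<Sum>m\<in>Poly_Mapping.keys q.
     (if yd_pattern j m then f (Poly_Mapping.lookup q m) * monom_eval e (m - yd_monom j) else 0))"
proof -
  interpret comm_ring_hom f by fact
  show ?thesis
    unfolding dpart_def yd_pattern_def[symmetric] yd_monom_def[symmetric] peval_sum[OF assms]
    by (rule sum.cong) (auto simp: peval_single)
qed

text \<open>A monomial of degree at most one in the y_i' is either free of them or of the form
  m' y_j' with m' free of them.\<close>

lemma monom_eval_split_yd:
  assumes f: "comm_ring_hom f" and deg: "yd_deg m \<le> 1"
    and ind: "\<forall>j. Yd j \<in> Poly_Mapping.keys m \<longrightarrow> j < n"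
    and e0: "\<forall>u. e0 u = (case u of Yd _ \<Rightarrow> 0 | _ \<Rightarrow> e u)"
  shows "f c * monom_eval e m = (if yd_pattern None m then f c * monom_eval e0 (m - yd_monom None) else 0)
     + (\<Sum>j<n. (if yd_pattern (Some j) m then f c * monom_eval e0 (m - yd_monom (Some j)) else 0) * e (Yd j))"
proof (cases "\<forall>i. Poly_Mapping.lookup m (Yd i) = 0")
  case True
  have "monom_eval e m = monom_eval e0 m"
    by (rule monom_eval_cong) (use True e0 in \<open>auto simp: in_keys_iff split: var.split\<close>)
  then show ?thesis using True by (auto simp: yd_pattern_def yd_monom_def)
next
  case False
  then obtain j where j: "Poly_Mapping.lookup m (Yd j) \<noteq> 0" by auto
  have j1: "Poly_Mapping.lookup m (Yd j) = 1"
    using j lookup_Yd_le_yd_deg[of m j] deg by linarith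
  have others: "Poly_Mapping.lookup m (Yd i) = 0" if "i \<noteq> j" for i
    using lookup_Yd_add_le_yd_deg[OF that, of m] j1 deg by linarith
  have "j < n" using ind j by (simp add: in_keys_iff)
  have pattern: "yd_pattern (Some i) m \<longleftrightarrow> i = j" for i
    using j1 others by (auto simp: yd_pattern_def)
  have "\<not> yd_pattern None m"
    using j by (auto simp: yd_pattern_def)
  define m' where "m' = m - Poly_Mapping.single (Yd j) 1"
  have m': "m = m' + Poly_Mapping.single (Yd j) 1"
    by (rule poly_mapping_eqI) (use j1 in \<open>auto simp: m'_def lookup_add lookup_minus lookup_single when_def\<close>)
  have "Poly_Mapping.lookup m' (Yd i) = 0" for i
    using j1 others unfolding m'_def by (cases "i = j") (auto simp: lookup_minus lookup_single)
  then have "monom_eval e m' = monom_eval e0 m'"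
    by (intro monom_eval_cong) (use e0 in \<open>auto simp: in_keys_iff split: var.split\<close>)
  moreover have "(\<Sum>i<n. (if yd_pattern (Some i) m then f c * monom_eval e0 (m - yd_monom (Some i)) else 0) * e (Yd i))
      = (\<Sum>i<n. if i = j then f c * monom_eval e0 m' * e (Yd j) else 0)"
    by (rule sum.cong) (auto simp: pattern yd_monom_def m'_def)
  moreover have "\<dots> = f c * monom_eval e0 m' * e (Yd j)"
    using \<open>j < n\<close> by simp
  ultimately show ?thesis
    using \<open>\<not> yd_pattern None m\<close> by (subst (1) m') (simp add: monom_eval_add)
qed

lemma peval_eq_dpart_decomp:
  assumes f: "comm_ring_hom f" and "yd_deg_le 1 q" and "\<forall>j. Yd j \<in> pvars q \<longrightarrow> j < n"
    and e0: "\<forall>u. e0 u = (case u of Yd _ \<Rightarrow> 0 | _ \<Rightarrow> e u)"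
  shows "peval f e q = peval f e0 (dpart None q) + (\<Sum>j<n. peval f e0 (dpart (Some j) q) * e (Yd j))"
proof -
  let ?c = "\<lambda>m. f (Poly_Mapping.lookup q m)"
  have "peval f e q = (\<Sum>m\<in>Poly_Mapping.keys q. ?c m * monom_eval e m)"
    by (rule peval_eq_sum_monom_eval)
  also have "\<dots> = (\<Sum>m\<in>Poly_Mapping.keys q.
        (if yd_pattern None m then ?c m * monom_eval e0 (m - yd_monom None) else 0)
      + (\<Sum>j<n. (if yd_pattern (Some j) m then ?c m * monom_eval e0 (m - yd_monom (Some j)) else 0) * e (Yd j)))"
  proof (rule sum.cong[OF refl], rule monom_eval_split_yd[OF f _ _ e0])
    fix m assume "m \<in> Poly_Mapping.keys q"
    with assms(2,3) show "yd_deg m \<le> 1" "\<forall>j. Yd j \<in> Poly_Mapping.keys m \<longrightarrow> j < n"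
      unfolding yd_deg_le_def pvars_def by auto
  qed
  also have "\<dots> = peval f e0 (dpart None q) + (\<Sum>j<n. peval f e0 (dpart (Some j) q) * e (Yd j))"
    unfolding peval_dpart[OF f] sum.distrib sum_distrib_right by (subst sum.swap) (rule refl)
  finally show ?thesis .
qed

theorem fps_shift_peval_chain_rule:
  assumes p: "pvars p \<subseteq> insert X (Y ` {..<n})"
    and s0: "\<forall>i<n. fps_nth (vec_index s i) 0 = vec_index r0 i"
  shows "fps_shift 1 (peval fps_const (senv r0 s t) p) = peval fps_const (senv r0 s 0) (eth_x p)
     + (\<Sum>j<n. peval fps_const (senv r0 s 0) (eth_y j p) * fps_shift 1 (vec_index s j))"
proof -
  define e where "e u = (case u of Yd i \<Rightarrow> fps_shift 1 (vec_index s i) | _ \<Rightarrow> senv r0 s 0 u)" for u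
  have "peval fps_const (senv r0 s t) p = peval fps_const e p"
    by (rule peval_cong) (use p in \<open>auto simp: e_def senv_def\<close>)
  also have "fps_shift 1 \<dots> = peval fps_const e (sderiv p)"
  proof (rule peval_sderiv[symmetric])
    have "X = rvar 0" "Y i = rvar (Suc i)" for i by simp_all
    then show "pvars p \<subseteq> range rvar"
      using p by blast
  qed (use p s0 in \<open>auto simp: e_def senv_def\<close>)
  also have "\<dots> = peval fps_const (senv r0 s 0) (dpart None (sderiv p))
     + (\<Sum>j<n. peval fps_const (senv r0 s 0) (dpart (Some j) (sderiv p)) * e (Yd j))"
  proof (rule peval_eq_dpart_decomp[OF comm_ring_hom_fps_const yd_deg_le_sderiv])
    show "\<forall>j. Yd j \<in> pvars (sderiv p) \<longrightarrow> j < n"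
      using pvars_sderiv[OF p] by (auto simp: deriv_vars_def)
  qed (auto simp: e_def senv_def split: var.split)
  finally show ?thesis by (simp add: e_def eth_x_def eth_y_def)
qed

subsection \<open>Polynomial stream differential equations\<close>

definition agree_upto :: "nat \<Rightarrow> 'a fps \<Rightarrow> 'a fps \<Rightarrow> bool" where
  "agree_upto k a b \<longleftrightarrow> (\<forall>i\<le>k. fps_nth a i = fps_nth b i)"

lemma agree_upto_refl [simp]: "agree_upto k a a"
  by (simp add: agree_upto_def)

lemma agree_upto_add: "agree_upto k a b \<Longrightarrow> agree_upto k c d \<Longrightarrow> agree_upto k (a + c) (b + d)"
  by (simp add: agree_upto_def)

lemma agree_upto_mult:
  assumes "agree_upto k a b" "agree_upto k c d"
  shows "agree_upto k (a * c) (b * (d :: 'a::comm_ring_1 fps))"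
  unfolding agree_upto_def fps_mult_nth
  by (intro allI impI sum.cong) (use assms in \<open>auto simp: agree_upto_def\<close>)

lemma agree_upto_sum:
  "(\<And>x. x \<in> A \<Longrightarrow> agree_upto k (f x) (g x)) \<Longrightarrow> agree_upto k (sum f A) (sum g A)"
  by (induction A rule: infinite_finite_induct) (auto intro: agree_upto_add)

lemma agree_upto_prod:
  "(\<And>x. x \<in> A \<Longrightarrow> agree_upto k (f x) (g x)) \<Longrightarrow> agree_upto k (prod f A) (prod g A :: 'a::comm_ring_1 fps)"
  by (induction A rule: infinite_finite_induct) (auto intro: agree_upto_mult)

lemma agree_upto_power: "agree_upto k a b \<Longrightarrow> agree_upto k (a ^ m) (b ^ m :: 'a::comm_ring_1 fps)"
  by (induction m) (auto intro: agree_upto_mult)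

lemma agree_upto_peval:
  "(\<And>u. agree_upto k (e1 u) (e2 u)) \<Longrightarrow> agree_upto k (peval fps_const e1 p) (peval fps_const e2 p)"
  unfolding peval_def by (intro agree_upto_sum agree_upto_mult agree_upto_prod agree_upto_power agree_upto_refl)

lemma agree_upto_le: "agree_upto k a b \<Longrightarrow> j \<le> k \<Longrightarrow> agree_upto j a b"
  by (simp add: agree_upto_def)

lemma agree_upto_trans: "agree_upto k a b \<Longrightarrow> agree_upto k b c \<Longrightarrow> agree_upto k a c"
  by (simp add: agree_upto_def)

lemma agree_upto_Suc_const_plus_X_mult:
  "agree_upto k a b \<Longrightarrow> agree_upto (Suc k) (fps_const c + fps_X * a) (fps_const c + fps_X * (b :: 'a::comm_ring_1 fps))"
  unfolding agree_upto_def by auto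

text \<open>The IVP for (y_1, ..., y_n, w) is treated as a system for a family g of n + 1 streams,
  g n playing the role of w; values of g beyond n are irrelevant.\<close>

definition ivp_env :: "'a::comm_ring_1 vec \<Rightarrow> (nat \<Rightarrow> 'a fps) \<Rightarrow> var \<Rightarrow> 'a fps" where
  "ivp_env r0 g = senv r0 (vec (dim_vec r0) g) (g (dim_vec r0))"

definition ivp_rhs :: "'a::comm_ring_1 mpoly vec \<Rightarrow> 'a vec \<Rightarrow> (nat \<Rightarrow> 'a fps) \<Rightarrow> nat \<Rightarrow> 'a fps" where
  "ivp_rhs P r0 g i = peval fps_const (ivp_env r0 g) (vec_index P i)"

definition ivp_init :: "'a vec \<Rightarrow> 'a \<Rightarrow> nat \<Rightarrow> 'a" where
  "ivp_init r0 c i = (if i < dim_vec r0 then vec_index r0 i else c)"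

lemma vec_index_vec_if: "vec_index (vec n f) i = (if i < n then f i else undef_vec (i - n))"
  by transfer (simp add: mk_vec_def)

lemma ivp_rhs_cong:
  assumes "\<And>i. i \<le> dim_vec r0 \<Longrightarrow> g i = h i"
  shows "ivp_rhs P r0 g = ivp_rhs P r0 h"
proof -
  have "vec (dim_vec r0) g = vec (dim_vec r0) h"
    using assms by (intro eq_vecI) auto
  then show ?thesis
    using assms[of "dim_vec r0"] by (intro ext) (simp add: ivp_rhs_def ivp_env_def)
qed

lemma agree_upto_ivp_rhs:
  assumes "\<forall>i\<le>dim_vec r0. agree_upto k (g i) (h i)"
  shows "agree_upto k (ivp_rhs P r0 g i) (ivp_rhs P r0 h i)"
  unfolding ivp_rhs_def
proof (rule agree_upto_peval)
  fix u show "agree_upto k (ivp_env r0 g u) (ivp_env r0 h u)"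
    using assms by (cases u) (auto simp: ivp_env_def senv_def vec_index_vec_if)
qed

definition ivp_family :: "nat \<Rightarrow> 'a fps vec \<Rightarrow> 'a fps \<Rightarrow> nat \<Rightarrow> 'a fps" where
  "ivp_family n s t i = (if i < n then vec_index s i else t)"

lemma ivp_solution_iff_family:
  "ivp_solution P r0 c s t \<longleftrightarrow> s \<in> carrier_vec (dim_vec r0) \<and>
     (\<forall>i\<le>dim_vec r0. fps_shift 1 (ivp_family (dim_vec r0) s t i) = ivp_rhs P r0 (ivp_family (dim_vec r0) s t) i
        \<and> fps_nth (ivp_family (dim_vec r0) s t i) 0 = ivp_init r0 c i)"
proof (cases "s \<in> carrier_vec (dim_vec r0)")
  case True
  then have "vec (dim_vec r0) (ivp_family (dim_vec r0) s t) = s"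
    by (intro eq_vecI) (auto simp: ivp_family_def)
  then have "ivp_env r0 (ivp_family (dim_vec r0) s t) = senv r0 s t"
    by (simp add: ivp_env_def ivp_family_def)
  then show ?thesis
    using True by (auto simp: ivp_solution_def ivp_rhs_def ivp_init_def ivp_family_def le_less)
qed (simp add: ivp_solution_def)

fun picard_iter :: "'a::comm_ring_1 mpoly vec \<Rightarrow> 'a vec \<Rightarrow> 'a \<Rightarrow> nat \<Rightarrow> nat \<Rightarrow> 'a fps" where
  "picard_iter P r0 c 0 i = fps_const (ivp_init r0 c i)"
| "picard_iter P r0 c (Suc m) i = fps_const (ivp_init r0 c i) + fps_X * ivp_rhs P r0 (picard_iter P r0 c m) i"

lemma agree_upto_picard_iter_Suc: "\<forall>i\<le>dim_vec r0. agree_upto m (picard_iter P r0 c (Suc m) i) (picard_iter P r0 c m i)"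
proof (induction m)
  case 0
  then show ?case by (simp add: agree_upto_def)
next
  case (Suc m)
  show ?case
  proof (intro allI impI)
    fix i
    have "agree_upto m (ivp_rhs P r0 (picard_iter P r0 c (Suc m)) i) (ivp_rhs P r0 (picard_iter P r0 c m) i)"
      by (rule agree_upto_ivp_rhs[OF Suc])
    then show "agree_upto (Suc m) (picard_iter P r0 c (Suc (Suc m)) i) (picard_iter P r0 c (Suc m) i)"
      by (simp only: picard_iter.simps) (rule agree_upto_Suc_const_plus_X_mult)
  qed
qed

lemma agree_upto_picard_iter:
  "m \<le> m' \<Longrightarrow> i \<le> dim_vec r0 \<Longrightarrow> agree_upto m (picard_iter P r0 c m' i) (picard_iter P r0 c m i)"
proof (induction m' rule: dec_induct)
  case (step q)
  then show ?case
    using agree_upto_picard_iter_Suc[of r0 q P c] agree_upto_le agree_upto_trans by blast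
qed simp

definition picard_limit :: "'a::comm_ring_1 mpoly vec \<Rightarrow> 'a vec \<Rightarrow> 'a \<Rightarrow> nat \<Rightarrow> 'a fps" where
  "picard_limit P r0 c i = Abs_fps (\<lambda>k. fps_nth (picard_iter P r0 c k i) k)"

lemma agree_upto_picard_limit: "i \<le> dim_vec r0 \<Longrightarrow> agree_upto m (picard_limit P r0 c i) (picard_iter P r0 c m i)"
  unfolding agree_upto_def picard_limit_def
  using agree_upto_picard_iter by (fastforce simp: agree_upto_def)

lemma picard_limit_fixpoint:
  assumes "i \<le> dim_vec r0"
  shows "picard_limit P r0 c i = fps_const (ivp_init r0 c i) + fps_X * ivp_rhs P r0 (picard_limit P r0 c) i"
proof (rule fps_ext)
  fix k
  show "fps_nth (picard_limit P r0 c i) k = fps_nth (fps_const (ivp_init r0 c i) + fps_X * ivp_rhs P r0 (picard_limit P r0 c) i) k"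
  proof (cases k)
    case 0
    then show ?thesis by (simp add: picard_limit_def)
  next
    case (Suc k')
    have "agree_upto k' (ivp_rhs P r0 (picard_limit P r0 c) i) (ivp_rhs P r0 (picard_iter P r0 c k') i)"
      by (rule agree_upto_ivp_rhs) (auto intro: agree_upto_picard_limit)
    then show ?thesis using Suc by (simp add: picard_limit_def agree_upto_def)
  qed
qed

lemma ivp_solution_picard_limit:
  "ivp_solution P r0 c (vec (dim_vec r0) (picard_limit P r0 c)) (picard_limit P r0 c (dim_vec r0))"
proof -
  let ?G = "picard_limit P r0 c"
  have family: "ivp_family (dim_vec r0) (vec (dim_vec r0) ?G) (?G (dim_vec r0)) i = ?G i"
    if "i \<le> dim_vec r0" for i
    using that by (auto simp: ivp_family_def)
  then have "ivp_rhs P r0 (ivp_family (dim_vec r0) (vec (dim_vec r0) ?G) (?G (dim_vec r0))) = ivp_rhs P r0 ?G"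
    by (rule ivp_rhs_cong)
  moreover have "fps_shift 1 (?G i) = ivp_rhs P r0 ?G i" if "i \<le> dim_vec r0" for i
    by (metis fps_shift_1_const_plus_X_mult picard_limit_fixpoint[OF that])
  moreover have "fps_nth (?G i) 0 = ivp_init r0 c i" if "i \<le> dim_vec r0" for i
    by (subst picard_limit_fixpoint[OF that]) simp
  ultimately show ?thesis
    unfolding ivp_solution_iff_family using family by auto
qed

lemma ivp_family_unique:
  assumes "\<forall>i\<le>dim_vec r0. fps_shift 1 (g i) = ivp_rhs P r0 g i \<and> fps_shift 1 (h i) = ivp_rhs P r0 h i
      \<and> fps_nth (g i) 0 = fps_nth (h i) 0"
    and "i \<le> dim_vec r0"
  shows "g i = h i"
proof -
  have "\<forall>i\<le>dim_vec r0. agree_upto k (g i) (h i)" for k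
  proof (induction k)
    case 0
    then show ?case using assms(1) by (simp add: agree_upto_def)
  next
    case (Suc k)
    show ?case
    proof (intro allI impI)
      fix i assume i: "i \<le> dim_vec r0"
      have "agree_upto k (fps_shift 1 (g i)) (fps_shift 1 (h i))"
        using agree_upto_ivp_rhs[OF Suc, of P i] assms(1) i by simp
      then show "agree_upto (Suc k) (g i) (h i)"
        using assms(1) i unfolding agree_upto_def by (metis Suc_le_mono fps_shift_nth Suc_eq_plus1 not0_implies_Suc)
    qed
  qed
  with assms(2) show ?thesis by (intro fps_ext) (auto simp: agree_upto_def)
qed

lemma ivp_solution_unique:
  assumes "ivp_solution P r0 c s t" "ivp_solution P r0 c s' t'"
  shows "s' = s \<and> t' = t"
proof -
  let ?g = "ivp_family (dim_vec r0) s t" and ?h = "ivp_family (dim_vec r0) s' t'"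
  have gh: "?g i = ?h i" if "i \<le> dim_vec r0" for i
    using assms[unfolded ivp_solution_iff_family] that by (intro ivp_family_unique[of r0 ?g P ?h]) auto
  have "vec_index s' i = vec_index s i" if "i < dim_vec r0" for i
    using gh[of i] that by (simp add: ivp_family_def)
  then have "s' = s"
    using assms by (intro eq_vecI) (auto simp: ivp_solution_def)
  moreover have "t' = t"
    using gh[of "dim_vec r0"] by (simp add: ivp_family_def)
  ultimately show ?thesis ..
qed

theorem ivp_solution_ex1: "\<exists>s t. \<forall>s' t'. ivp_solution P r0 c s' t' \<longleftrightarrow> s' = s \<and> t' = t"
  using ivp_solution_picard_limit ivp_solution_unique by blast

lemma map_mat_mat_delete: "map_mat h (mat_delete A i j) = mat_delete (map_mat h A) i j"
  by (rule eq_matI) (auto simp: mat_delete_def)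

lemma map_mat_adj_mat:
  assumes "comm_ring_hom h"
  shows "map_mat h (adj_mat A) = adj_mat (map_mat h A)"
proof -
  interpret comm_ring_hom h by fact
  show ?thesis
    by (rule eq_matI)
      (auto simp: adj_mat_def cofactor_def hom_mult hom_power hom_uminus map_mat_mat_delete[symmetric])
qed

lemma mult_mat_vec_smult_right:
  "A \<in> carrier_mat m n \<Longrightarrow> v \<in> carrier_vec n \<Longrightarrow> A *\<^sub>v (c \<cdot>\<^sub>v v) = c \<cdot>\<^sub>v (A *\<^sub>v v :: 'a::comm_ring_1 vec)"
  by (rule eq_vecI) auto

lemma mult_mat_vec_uminus_right:
  "A \<in> carrier_mat m n \<Longrightarrow> v \<in> carrier_vec n \<Longrightarrow> A *\<^sub>v (- v) = - (A *\<^sub>v v :: 'a::comm_ring_1 vec)"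
  by (rule eq_vecI) auto

lemma smult_one_mult_mat_vec:
  "v \<in> carrier_vec n \<Longrightarrow> (c \<cdot>\<^sub>m 1\<^sub>m n) *\<^sub>v v = c \<cdot>\<^sub>v (v :: 'a::comm_ring_1 vec)"
  by (rule eq_vecI) (auto simp: row_smult smult_scalar_prod_distrib)

lemma mult_adj_mat_vec:
  "A \<in> carrier_mat n n \<Longrightarrow> v \<in> carrier_vec n \<Longrightarrow> A *\<^sub>v (adj_mat A *\<^sub>v v) = det A \<cdot>\<^sub>v v"
  by (metis assoc_mult_mat_vec adj_mat(1,2) smult_one_mult_mat_vec)

lemma adj_mat_mult_vec:
  "A \<in> carrier_mat n n \<Longrightarrow> v \<in> carrier_vec n \<Longrightarrow> adj_mat A *\<^sub>v (A *\<^sub>v v) = det A \<cdot>\<^sub>v v"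
  by (metis assoc_mult_mat_vec adj_mat(1,3) smult_one_mult_mat_vec)

lemma invertible_mat_if_mult_det_eq_1:
  assumes A: "A \<in> carrier_mat n n" and "t * det A = 1"
  shows "invertible_mat (A :: 'a::comm_ring_1 mat)"
proof -
  have "t \<cdot>\<^sub>m (det A \<cdot>\<^sub>m 1\<^sub>m n) = 1\<^sub>m n"
    using assms(2) by (auto simp: mult.assoc[symmetric])
  then have "A * (t \<cdot>\<^sub>m adj_mat A) = 1\<^sub>m n" "(t \<cdot>\<^sub>m adj_mat A) * A = 1\<^sub>m n"
    using adj_mat[OF A] by (simp_all add: mult_smult_distrib[OF A] mult_smult_assoc_mat[OF _ A])
  then show ?thesis
    using A adj_mat(1)[OF A] unfolding invertible_mat_def inverts_mat_def
    by (intro conjI exI[of _ "t \<cdot>\<^sub>m adj_mat A"]) (auto simp: square_mat.simps)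
qed

lemma det_nonzero_if_invertible_mat:
  assumes "invertible_mat (A :: 'a::field mat)" "A \<in> carrier_mat n n"
  shows "det A \<noteq> 0"
proof -
  from assms(1) obtain B where AB: "inverts_mat A B" and BA: "inverts_mat B A"
    unfolding invertible_mat_def by blast
  from BA have "B * A = 1\<^sub>m (dim_row B)" by (simp add: inverts_mat_def)
  then have "dim_row B = n" using assms(2) by (metis carrier_matD(2) index_mult_mat(3) index_one_mat(3))
  moreover from AB have AB': "A * B = 1\<^sub>m n" using assms(2) by (simp add: inverts_mat_def)
  then have "dim_col B = n" by (metis index_mult_mat(3) index_one_mat(3))
  ultimately have "det A * det B = 1"
    using det_mult[OF assms(2), of B] AB' by auto
  then show ?thesis by auto
qed

subsection \<open>The polynomial system\<close>

locale implicit_system =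
  fixes E :: "'a::field_char_0 mpoly vec" and r0 :: "'a vec" and n :: nat
  assumes dim_E: "dim_vec E = n" and dim_r0: "dim_vec r0 = n"
    and vars_E: "\<forall>i<n. pvars (vec_index E i) \<subseteq> insert X (Y ` {..<n})"
    and E_init: "\<forall>i<n. peval id (kenv r0 r0) (vec_index E i) = 0"
    and jac_const_invertible: "invertible_mat (jac_const E r0)"
begin

definition jac_poly :: "'a mpoly mat" where
  "jac_poly = mat n n (\<lambda>(i, j). subst_init r0 n (eth_y j (vec_index E i)))"

definition dx_poly :: "'a mpoly vec" where
  "dx_poly = vec n (\<lambda>i. subst_init r0 n (eth_x (vec_index E i)))"

definition det0 :: 'a where
  "det0 = det (jac_const E r0)"

text \<open>w stands for 1 / det J.  Its equation w' = - w(0) w (det J)' is linear in w: since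
  (w det J)' = w' det J + w(0) (det J)', it keeps w det J constant.\<close>

definition rhs_y :: "nat \<Rightarrow> 'a mpoly" where
  "rhs_y i = - (PVar W * (adj_mat jac_poly *\<^sub>v dx_poly) $ i)"

definition rhs_w :: "'a mpoly" where
  "rhs_w = - (PConst (inverse det0) * PVar W * (subst_init r0 n (eth_x (det jac_poly))
     + (\<Sum>j<n. subst_init r0 n (eth_y j (det jac_poly)) * rhs_y j)))"

definition rhs :: "'a mpoly vec" where
  "rhs = vec (Suc n) (\<lambda>i. if i < n then rhs_y i else rhs_w)"

lemma jac_poly_carrier: "jac_poly \<in> carrier_mat n n"
  by (simp add: jac_poly_def)

lemma pvars_jac_poly: "i < n \<Longrightarrow> j < n \<Longrightarrow> pvars (jac_poly $$ (i, j)) \<subseteq> insert X (Y ` {..<n})"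
  by (simp add: jac_poly_def pvars_subst_init)

lemma pvars_det_jac_poly: "pvars (det jac_poly) \<subseteq> insert X (Y ` {..<n})"
  by (rule pvars_det[OF jac_poly_carrier pvars_jac_poly])

lemma pvars_adj_mult_dx_poly:
  assumes "i < n"
  shows "pvars ((adj_mat jac_poly *\<^sub>v dx_poly) $ i) \<subseteq> insert X (Y ` {..<n})"
proof -
  have "(adj_mat jac_poly *\<^sub>v dx_poly) $ i = (\<Sum>j\<in>{0..<n}. adj_mat jac_poly $$ (i, j) * dx_poly $ j)"
    using assms adj_mat(1)[OF jac_poly_carrier] by (auto simp: scalar_prod_def dx_poly_def)
  also have "pvars \<dots> \<subseteq> insert X (Y ` {..<n})"
  proof (rule order.trans[OF pvars_sum UN_least])
    fix j assume "j \<in> {0..<n}"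
    then show "pvars (adj_mat jac_poly $$ (i, j) * dx_poly $ j) \<subseteq> insert X (Y ` {..<n})"
      using pvars_mult[of "adj_mat jac_poly $$ (i, j)" "dx_poly $ j"] pvars_subst_init[of r0 n]
        pvars_adj_mat[OF jac_poly_carrier pvars_jac_poly assms, of j]
      by (auto simp: dx_poly_def)
  qed
  finally show ?thesis .
qed

lemma pvars_rhs_y: "i < n \<Longrightarrow> pvars (rhs_y i) \<subseteq> {X, W} \<union> Y ` {..<n}"
  unfolding rhs_y_def using pvars_mult[of "PVar W"] pvars_PVar[of W] pvars_adj_mult_dx_poly by fastforce

lemma pvars_rhs_w: "pvars rhs_w \<subseteq> {X, W} \<union> Y ` {..<n}"
proof -
  let ?V = "{X, W} \<union> Y ` {..<n}"
  have "pvars (subst_init r0 n (eth_y j (det jac_poly)) * rhs_y j) \<subseteq> ?V" if "j < n" for j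
    using pvars_mult pvars_rhs_y[OF that] pvars_subst_init by fastforce
  then have "pvars (\<Sum>j<n. subst_init r0 n (eth_y j (det jac_poly)) * rhs_y j) \<subseteq> ?V"
    by (intro order.trans[OF pvars_sum UN_least]) auto
  then have "pvars (subst_init r0 n (eth_x (det jac_poly))
      + (\<Sum>j<n. subst_init r0 n (eth_y j (det jac_poly)) * rhs_y j)) \<subseteq> ?V"
    using pvars_add pvars_subst_init by fastforce
  moreover have "pvars (PConst (inverse det0) * PVar W :: 'a mpoly) \<subseteq> ?V"
    using pvars_mult[of "PConst (inverse det0)" "PVar W :: 'a mpoly"] pvars_PVar[of W] by auto
  ultimately show ?thesis
    unfolding rhs_w_def using pvars_mult by fastforce
qed

lemma pvars_rhs: "i \<le> n \<Longrightarrow> pvars (rhs $ i) \<subseteq> {X, W} \<union> Y ` {..<n}"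
  using pvars_rhs_y pvars_rhs_w by (auto simp: rhs_def)

abbreviation stream_eval :: "'a fps vec \<Rightarrow> 'a fps \<Rightarrow> 'a mpoly \<Rightarrow> 'a fps" where
  "stream_eval s t \<equiv> peval fps_const (senv r0 s t)"

abbreviation dx_stream :: "'a fps vec \<Rightarrow> 'a fps vec" where
  "dx_stream s \<equiv> vec n (\<lambda>i. peval fps_const (senv r0 s 0) (eth_x (vec_index E i)))"

abbreviation sderiv_vec :: "'a fps vec \<Rightarrow> 'a fps vec" where
  "sderiv_vec s \<equiv> vec n (\<lambda>i. sderiv_stream (vec_index s i))"

abbreviation has_init :: "'a fps vec \<Rightarrow> bool" where
  "has_init s \<equiv> \<forall>i<n. fps_nth (vec_index s i) 0 = vec_index r0 i"

lemma comm_ring_hom_stream_eval: "comm_ring_hom (stream_eval s t)"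
  by (rule comm_ring_hom_peval[OF comm_ring_hom_fps_const])

lemma jac_stream_carrier: "jac_stream E r0 s \<in> carrier_mat n n"
  by (simp add: jac_stream_def dim_E)

lemma map_mat_jac_poly: "map_mat (stream_eval s t) jac_poly = jac_stream E r0 s"
proof (rule eq_matI)
  fix i j assume "i < dim_row (jac_stream E r0 s)" "j < dim_col (jac_stream E r0 s)"
  then show "map_mat (stream_eval s t) jac_poly $$ (i, j) = jac_stream E r0 s $$ (i, j)"
    using peval_subst_init_senv[OF pvars_eth_y[OF vars_E[rule_format]] dim_r0]
    by (simp add: jac_poly_def jac_stream_def dim_E)
qed (auto simp: jac_stream_def jac_poly_def dim_E)

lemma map_vec_dx_poly: "map_vec (stream_eval s t) dx_poly = dx_stream s"
  using peval_subst_init_senv[OF pvars_eth_x[OF vars_E[rule_format]] dim_r0]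
  by (intro eq_vecI) (auto simp: dx_poly_def)

lemma stream_eval_det_jac_poly: "stream_eval s t (det jac_poly) = det (jac_stream E r0 s)"
  using comm_ring_hom.hom_det[OF comm_ring_hom_stream_eval] map_mat_jac_poly by metis

lemma stream_eval_rhs_y:
  assumes "i < n"
  shows "stream_eval s t (rhs_y i) = - (t * (adj_mat (jac_stream E r0 s) *\<^sub>v dx_stream s) $ i)"
proof -
  interpret h: comm_ring_hom "stream_eval s t" by (rule comm_ring_hom_stream_eval)
  have "map_vec (stream_eval s t) (adj_mat jac_poly *\<^sub>v dx_poly)
      = map_mat (stream_eval s t) (adj_mat jac_poly) *\<^sub>v map_vec (stream_eval s t) dx_poly"
    by (rule h.mult_mat_vec_hom[OF adj_mat(1)[OF jac_poly_carrier]]) (simp add: dx_poly_def)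
  also have "\<dots> = adj_mat (jac_stream E r0 s) *\<^sub>v dx_stream s"
    by (simp add: map_mat_adj_mat[OF comm_ring_hom_stream_eval] map_mat_jac_poly map_vec_dx_poly)
  finally have "stream_eval s t ((adj_mat jac_poly *\<^sub>v dx_poly) $ i) = (adj_mat (jac_stream E r0 s) *\<^sub>v dx_stream s) $ i"
    using assms adj_mat(1)[OF jac_poly_carrier] by (metis carrier_matD(1) dim_mult_mat_vec index_map_vec(1))
  then show ?thesis
    by (simp add: rhs_y_def peval_fps_const_simps h.hom_uminus senv_def)
qed

lemma fps_shift_det_jac_stream:
  assumes "has_init s"
  shows "fps_shift 1 (det (jac_stream E r0 s)) = stream_eval s 0 (eth_x (det jac_poly))
     + (\<Sum>j<n. stream_eval s 0 (eth_y j (det jac_poly)) * fps_shift 1 (vec_index s j))"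
  using fps_shift_peval_chain_rule[OF pvars_det_jac_poly assms, of 0] stream_eval_det_jac_poly by simp

lemma stream_eval_rhs_w:
  assumes "has_init s" and "\<forall>j<n. fps_shift 1 (vec_index s j) = stream_eval s t (rhs_y j)"
  shows "stream_eval s t rhs_w = - (fps_const (inverse det0) * t * fps_shift 1 (det (jac_stream E r0 s)))"
proof -
  have "(\<Sum>j<n. stream_eval s t (subst_init r0 n (eth_y j (det jac_poly))) * stream_eval s t (rhs_y j))
      = (\<Sum>j<n. stream_eval s 0 (eth_y j (det jac_poly)) * fps_shift 1 (vec_index s j))"
    using assms(2) by (simp add: peval_subst_init_senv[OF pvars_eth_y[OF pvars_det_jac_poly] dim_r0])
  then show ?thesis
    using fps_shift_det_jac_stream[OF assms(1)]
    by (simp add: rhs_w_def peval_fps_const_simps peval_uminus[OF comm_ring_hom_fps_const] senv_def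
        peval_subst_init_senv[OF pvars_eth_x[OF pvars_det_jac_poly] dim_r0])
qed

lemma fps_nth_det_jac_stream:
  assumes "has_init s"
  shows "fps_nth (det (jac_stream E r0 s)) 0 = det0"
proof -
  have "map_mat (\<lambda>a. fps_nth a 0) (jac_stream E r0 s) = jac_const E r0"
    using fps_nth_0_peval_senv[OF pvars_eth_y[OF vars_E[rule_format]] assms]
    by (intro eq_matI) (auto simp: jac_stream_def jac_const_def dim_E)
  then show ?thesis
    unfolding det0_def using comm_ring_hom.hom_det[OF comm_ring_hom_fps_nth_0] by metis
qed

lemma det0_nonzero: "det0 \<noteq> 0"
  unfolding det0_def by (rule det_nonzero_if_invertible_mat[where n = n, OF jac_const_invertible]) (simp add: jac_const_def dim_E)

lemma pvars_E: "i < n \<Longrightarrow> pvars (vec_index E i) \<subseteq> deriv_vars n"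
  using vars_E by (auto simp: deriv_vars_def)

lemma fps_nth_stream_eval_E:
  "has_init s \<Longrightarrow> i < n \<Longrightarrow> fps_nth (stream_eval s 0 (vec_index E i)) 0 = 0"
  using fps_nth_0_peval_senv[OF pvars_E] E_init by simp

lemma fps_shift_stream_eval_E:
  assumes "has_init s" "i < n"
  shows "fps_shift 1 (stream_eval s 0 (vec_index E i)) = (dx_stream s + jac_stream E r0 s *\<^sub>v sderiv_vec s) $ i"
  using fps_shift_peval_chain_rule[OF vars_E[rule_format, OF assms(2)] assms(1), of 0] assms(2)
  by (simp add: jac_stream_def dim_E scalar_prod_def atLeast0LessThan)

lemma stream_solution_iff:
  "stream_solution E s \<longleftrightarrow> s \<in> carrier_vec n \<and> (\<forall>i<n. stream_eval s 0 (vec_index E i) = 0)"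
proof -
  have "peval fps_const (senv (0\<^sub>v n) s 0) (vec_index E i) = stream_eval s 0 (vec_index E i)" if "i < n" for i
  proof (rule peval_cong)
    fix u assume "u \<in> pvars (vec_index E i)"
    with vars_E that have "u = X \<or> (\<exists>j. u = Y j)" by auto
    then show "senv (0\<^sub>v n) s 0 u = senv r0 s 0 u" by (auto simp: senv_def)
  qed
  then show ?thesis by (auto simp: stream_solution_def dim_E)
qed

lemma jac_stream_mult_sderiv_vec:
  assumes "stream_solution E s" "has_init s"
  shows "jac_stream E r0 s *\<^sub>v sderiv_vec s = - dx_stream s"
proof (rule eq_vecI)
  fix i assume "i < dim_vec (- dx_stream s)"
  then have "i < n" by simp
  with assms have "0 = (dx_stream s + jac_stream E r0 s *\<^sub>v sderiv_vec s) $ i"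
    using fps_shift_stream_eval_E[OF assms(2)] by (simp add: stream_solution_iff)
  with \<open>i < n\<close> show "(jac_stream E r0 s *\<^sub>v sderiv_vec s) $ i = (- dx_stream s) $ i"
    using jac_stream_carrier[of s] by (simp add: eq_neg_iff_add_eq_0 add.commute)
qed (simp add: jac_stream_def dim_E)

lemma ivp_solution_rhs_iff:
  "ivp_solution rhs r0 c s t \<longleftrightarrow> s \<in> carrier_vec n \<and> has_init s
     \<and> (\<forall>i<n. fps_shift 1 (vec_index s i) = stream_eval s t (rhs_y i))
     \<and> fps_shift 1 t = stream_eval s t rhs_w \<and> fps_nth t 0 = c"
  by (auto simp: ivp_solution_def rhs_def dim_r0)

lemma ivp_solution_det_jac_stream:
  assumes "ivp_solution rhs r0 (inverse det0) s t"
  shows "t * det (jac_stream E r0 s) = 1"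
proof -
  define d where "d = det (jac_stream E r0 s)"
  define k where "k = fps_const (inverse det0)"
  from assms[unfolded ivp_solution_rhs_iff] have init: "has_init s"
    and ds: "\<forall>i<n. fps_shift 1 (vec_index s i) = stream_eval s t (rhs_y i)"
    and dt: "fps_shift 1 t = stream_eval s t rhs_w" and t0: "fps_nth t 0 = inverse det0" by auto
  have dt': "fps_shift 1 t = - (k * t * fps_shift 1 d)"
    using dt stream_eval_rhs_w[OF init ds] by (simp add: d_def k_def)
  define u where "u = 1 - t * d"
  have "fps_shift 1 u = - (fps_shift 1 t * d + k * fps_shift 1 d)"
    by (simp add: u_def fps_shift_diff fps_shift_one fps_shift_1_mult[simplified] t0 k_def)
  also have "\<dots> = - (k * fps_shift 1 d) * u"
    unfolding dt' u_def by (simp add: algebra_simps)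
  finally have "fps_shift 1 u = - (k * fps_shift 1 d) * u" .
  moreover have "fps_nth u 0 = 0"
    using t0 fps_nth_det_jac_stream[OF init] det0_nonzero by (simp add: u_def d_def)
  ultimately have "u = 0" by (rule fps_eq_0_if_shift_eq_mult)
  then show ?thesis by (simp add: u_def d_def)
qed

lemma ivp_solution_imp_stream_solution:
  assumes "ivp_solution rhs r0 (inverse det0) s t"
  shows "stream_solution E s"
proof -
  let ?J = "jac_stream E r0 s"
  from assms[unfolded ivp_solution_rhs_iff] have s: "s \<in> carrier_vec n" and init: "has_init s"
    and ds: "\<forall>i<n. fps_shift 1 (vec_index s i) = stream_eval s t (rhs_y i)" by auto
  have adj: "adj_mat ?J \<in> carrier_mat n n"
    by (rule adj_mat(1)[OF jac_stream_carrier])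
  have "sderiv_vec s = - (t \<cdot>\<^sub>v (adj_mat ?J *\<^sub>v dx_stream s))"
    using ds adj by (intro eq_vecI) (auto simp: stream_eval_rhs_y)
  then have "?J *\<^sub>v sderiv_vec s = - ((t * det ?J) \<cdot>\<^sub>v dx_stream s)"
    using adj
    by (simp add: mult_mat_vec_uminus_right[OF jac_stream_carrier] mult_mat_vec_smult_right[OF jac_stream_carrier]
        mult_adj_mat_vec[OF jac_stream_carrier] smult_smult_assoc)
  then have lin: "?J *\<^sub>v sderiv_vec s = - dx_stream s"
    by (simp add: ivp_solution_det_jac_stream[OF assms])
  have "stream_eval s 0 (vec_index E i) = 0" if "i < n" for i
  proof (rule fps_eq_0_if_shift_eq_mult[where a = 0])
    show "fps_shift 1 (stream_eval s 0 (vec_index E i)) = 0 * stream_eval s 0 (vec_index E i)"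
      using fps_shift_stream_eval_E[OF init that] lin that by simp
  qed (rule fps_nth_stream_eval_E[OF init that])
  with s show ?thesis by (simp add: stream_solution_iff)
qed

lemma stream_solution_imp_ivp_solution:
  assumes sol: "stream_solution E s" and init: "has_init s"
  shows "ivp_solution rhs r0 (inverse det0) s (inverse (det (jac_stream E r0 s)))"
proof -
  let ?J = "jac_stream E r0 s"
  define d where "d = det ?J"
  define t where "t = inverse d"
  define k where "k = fps_const (inverse det0)"
  have s: "s \<in> carrier_vec n" using sol by (simp add: stream_solution_iff)
  have d0: "fps_nth d 0 = det0" unfolding d_def by (rule fps_nth_det_jac_stream[OF init])
  have td: "t * d = 1" unfolding t_def by (rule inverse_mult_eq_1) (simp add: d0 det0_nonzero)
  have t0: "fps_nth t 0 = inverse det0" by (simp add: t_def d0)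
  have "adj_mat ?J *\<^sub>v dx_stream s = - (d \<cdot>\<^sub>v sderiv_vec s)"
    using jac_stream_mult_sderiv_vec[OF sol init] adj_mat_mult_vec[OF jac_stream_carrier, of "sderiv_vec s" s]
    by (metis (no_types, lifting) adj_mat(1) carrier_vec_dim_vec d_def dim_vec jac_stream_carrier
        mult_mat_vec_uminus_right uminus_uminus_vec)
  then have ds: "\<forall>i<n. fps_shift 1 (vec_index s i) = stream_eval s t (rhs_y i)"
    using td by (simp add: stream_eval_rhs_y mult.assoc[symmetric])
  have "0 = fps_shift 1 (t * d)" using td by (simp add: fps_shift_one)
  also have "\<dots> = fps_shift 1 t * d + k * fps_shift 1 d"
    by (simp add: fps_shift_1_mult[simplified] t0 k_def)
  finally have deriv_td: "fps_shift 1 t * d = - (k * fps_shift 1 d)" by (simp add: eq_neg_iff_add_eq_0)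
  have "fps_shift 1 t = fps_shift 1 t * d * t"
    using td by (simp add: mult.assoc mult.commute)
  also have "\<dots> = - (k * t * fps_shift 1 d)"
    unfolding deriv_td by (simp add: ac_simps)
  finally have "fps_shift 1 t = stream_eval s t rhs_w"
    using stream_eval_rhs_w[OF init ds] by (simp add: k_def d_def)
  then show ?thesis
    using s init ds t0 by (simp add: ivp_solution_rhs_iff t_def d_def)
qed

lemma sderiv_vec_eq:
  assumes "stream_solution E s" "has_init s" "N \<in> carrier_mat n n" "N * jac_stream E r0 s = 1\<^sub>m n"
  shows "sderiv_vec s = - (N *\<^sub>v dx_stream s)"
proof -
  have "sderiv_vec s = (N * jac_stream E r0 s) *\<^sub>v sderiv_vec s"
    using assms(4) by simp
  also have "\<dots> = N *\<^sub>v (- dx_stream s)"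
    using assms(3) jac_stream_carrier[of s] jac_stream_mult_sderiv_vec[OF assms(1,2)] by simp
  also have "\<dots> = - (N *\<^sub>v dx_stream s)"
    by (rule mult_mat_vec_uminus_right[OF assms(3)]) simp
  finally show ?thesis .
qed

end

theorem theorem3p7:
  fixes E :: "'a::field_char_0 mpoly vec" and r0 :: "'a vec" and n :: nat
  assumes "dim_vec E = n" and "dim_vec r0 = n"
    and "\<forall>i<n. pvars (vec_index E i) \<subseteq> insert X (Y ` {..<n})"
    and "\<forall>i<n. peval id (kenv r0 r0) (vec_index E i) = 0"
    and "invertible_mat (jac_const E r0)"
  shows "\<exists>\<sigma>. stream_solution E \<sigma> \<and> (\<forall>i<n. fps_nth (vec_index \<sigma> i) 0 = vec_index r0 i)
     \<and> (\<forall>\<rho>. stream_solution E \<rho> \<and> (\<forall>i<n. fps_nth (vec_index \<rho> i) 0 = vec_index r0 i)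
            \<longrightarrow> \<rho> = \<sigma>)
     \<and> invertible_mat (jac_stream E r0 \<sigma>)
     \<and> (\<forall>N \<in> carrier_mat n n. inverts_mat (jac_stream E r0 \<sigma>) N \<and> inverts_mat N (jac_stream E r0 \<sigma>)
          \<longrightarrow> vec n (\<lambda>i. sderiv_stream (vec_index \<sigma> i)) =
              - (N *\<^sub>v vec n (\<lambda>i. peval fps_const (senv r0 \<sigma> 0) (eth_x (vec_index E i)))))
     \<and> (\<exists>P c. dim_vec P = Suc n
          \<and> (\<forall>i\<le>n. pvars (vec_index P i) \<subseteq> {X, W} \<union> Y ` {..<n})
          \<and> (\<exists>\<tau>. \<forall>\<rho> \<upsilon>. ivp_solution P r0 c \<rho> \<upsilon> \<longleftrightarrow> (\<rho> = \<sigma> \<and> \<upsilon> = \<tau>)))"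
proof -
  interpret implicit_system E r0 n using assms by unfold_locales
  obtain \<sigma> \<tau> where ivp: "\<forall>\<rho> \<upsilon>. ivp_solution rhs r0 (inverse det0) \<rho> \<upsilon> \<longleftrightarrow> \<rho> = \<sigma> \<and> \<upsilon> = \<tau>"
    using ivp_solution_ex1 by blast
  then have ivp_sol: "ivp_solution rhs r0 (inverse det0) \<sigma> \<tau>" by blast
  have sol: "stream_solution E \<sigma>"
    by (rule ivp_solution_imp_stream_solution[OF ivp_sol])
  have init: "has_init \<sigma>"
    using ivp_sol by (simp add: ivp_solution_rhs_iff)
  have "\<rho> = \<sigma>" if "stream_solution E \<rho>" "has_init \<rho>" for \<rho>
    using stream_solution_imp_ivp_solution[OF that] ivp by blast
  moreover have "invertible_mat (jac_stream E r0 \<sigma>)"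
    by (rule invertible_mat_if_mult_det_eq_1[OF jac_stream_carrier ivp_solution_det_jac_stream[OF ivp_sol]])
  moreover have "sderiv_vec \<sigma> = - (N *\<^sub>v dx_stream \<sigma>)"
    if "N \<in> carrier_mat n n" "inverts_mat N (jac_stream E r0 \<sigma>)" for N
    using that by (intro sderiv_vec_eq[OF sol init]) (auto simp: inverts_mat_def)
  moreover have "dim_vec rhs = Suc n" by (simp add: rhs_def)
  ultimately show ?thesis
    using sol init ivp pvars_rhs by blast
qed

end
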